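(* Let $S$ be a word of length $n$ and $C$ a word. If $C$ is an s-cover of $S$, then there exist positive integers $r_0,\dots,r_{n-1}$ such that the word $S[0]^{r_0}S[1]^{r_1}\cdots S[n-1]^{r_{n-1}}$ belongs to the shuffle closure $C^{\odot}$.
   Context: For words $C,S$, $C$ is an \emph{s-cover} of $S$ if for every position $i$ of $S$ there exist indices $j_0<\dots<j_{|C|-1}$ with $S[j_t]=C[t]$ for all $t$ and $i\in\{j_0,\dots,j_{|C|-1}\}$. For a letter $x$ and integer $r\ge1$, $x^r$ is $x$ repeated $r$ times. The shuffle closure $C^{\odot}$ is the set of words $W$ whose set of positions $\{0,\dots,|W|-1\}$ can be partitioned into pairwise disjoint sets, each of which is the set of positions $j_0<\dots<j_{|C|-1}$ of an occurrence of $C$ as a subsequence of $W$ (i.e., $W$ is an interleaving of copies of $C$). *)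

theory Defs
  imports Main
begin

text \<open>Words are lists. An occurrence of C as a subsequence of S is given by the list of
  its positions j_0 < ... < j_{|C|-1} in S.\<close>

definition occurrence :: "'a list \<Rightarrow> 'a list \<Rightarrow> nat list \<Rightarrow> bool" where
  "occurrence C S js \<longleftrightarrow>
     length js = length C \<and> sorted_wrt (<) js \<and> (\<forall>j\<in>set js. j < length S) \<and>
     (\<forall>t<length C. S ! (js ! t) = C ! t)"

definition s_cover :: "'a list \<Rightarrow> 'a list \<Rightarrow> bool" where
  "s_cover C S \<longleftrightarrow> (\<forall>i<length S. \<exists>js. occurrence C S js \<and> i \<in> set js)"

text \<open>Shuffle closure: the positions of W are partitioned into pairwise disjoint
  position sets of occurrences of C.\<close>

definition shuffle_closure :: "'a list \<Rightarrow> 'a list set" where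
  "shuffle_closure C = {W. \<exists>occs :: nat list list.
      (\<forall>js\<in>set occs. occurrence C W js) \<and>
      (\<forall>a<length occs. \<forall>b<length occs. a \<noteq> b \<longrightarrow> set (occs ! a) \<inter> set (occs ! b) = {}) \<and>
      (\<Union>js\<in>set occs. set js) = {0..<length W}}"

definition expand_word :: "'a list \<Rightarrow> (nat \<Rightarrow> nat) \<Rightarrow> 'a list" where
  "expand_word S r = concat (map (\<lambda>i. replicate (r i) (S ! i)) [0..<length S])"

end

theory Submission
  imports Defs
begin

text \<open>Fix occurrences of C covering every position of S, and copy the letter at position p
  once for each of these occurrences passing through p. Tag every copy with its occurrence
  (the pair (p, k) is the copy of S[p] belonging to the k-th occurrence). Since the copies are
  listed position by position, those carrying a fixed tag k spell out C along the k-th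
  occurrence, so the tags partition the expanded word into occurrences of C.\<close>

lemma filter_upt_mem_strict_sorted:
  assumes "sorted_wrt (<) xs" and "\<forall>j\<in>set xs. j < n"
  shows "filter (\<lambda>p. p \<in> set xs) [0..<n] = xs"
  by (rule sorted_distinct_set_unique)
    (use assms in \<open>auto intro: sorted_wrt_filter simp: strict_sorted_iff\<close>)

lemma filter_upt_eq_singleton:
  assumes "k < m"
  shows "filter (\<lambda>j. Q j \<and> j = k) [0..<m] = (if Q k then [k] else [])"
  by (rule sorted_distinct_set_unique) (use assms in \<open>auto intro: sorted_wrt_filter\<close>)

lemma map_nth_filter_upt_length:
  "map (nth xs) (filter (\<lambda>i. Q (xs ! i)) [0..<length xs]) = filter Q xs"
  by (subst (2) map_nth[symmetric]) (simp add: filter_map comp_def)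

lemma occurrence_lift:
  assumes "occurrence C S js" and "map h xs = js" and "sorted_wrt (<) xs"
    and "\<forall>x\<in>set xs. x < length W \<and> W ! x = S ! h x"
  shows "occurrence C W xs"
proof -
  have len: "length xs = length C"
    using assms(1,2) unfolding occurrence_def by auto
  have "W ! (xs ! t) = C ! t" if "t < length C" for t
  proof -
    have "W ! (xs ! t) = S ! (js ! t)"
      using assms(2,4) len that by auto
    then show ?thesis
      using assms(1) that unfolding occurrence_def by simp
  qed
  then show ?thesis
    using assms(3,4) len unfolding occurrence_def by blast
qed

definition occurrences_through :: "nat list list \<Rightarrow> nat \<Rightarrow> nat list" where
  "occurrences_through occs p = filter (\<lambda>k. p \<in> set (occs ! k)) [0..<length occs]"

definition tagged_copies :: "nat list list \<Rightarrow> nat \<Rightarrow> (nat \<times> nat) list" where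
  "tagged_copies occs n = concat (map (\<lambda>p. map (Pair p) (occurrences_through occs p)) [0..<n])"

lemma occurrences_through_eq_Nil_iff:
  "occurrences_through occs p = [] \<longleftrightarrow> (\<forall>js\<in>set occs. p \<notin> set js)"
  by (auto simp: occurrences_through_def filter_empty_conv all_set_conv_all_nth)

lemma expand_word_occurrences_through:
  "expand_word S (\<lambda>p. length (occurrences_through occs p))
     = map (\<lambda>q. S ! fst q) (tagged_copies occs (length S))"
  by (simp add: expand_word_def tagged_copies_def map_concat comp_def map_replicate_const)

lemma tagged_copies_snd_less:
  "q \<in> set (tagged_copies occs n) \<Longrightarrow> snd q < length occs"
  by (auto simp: tagged_copies_def occurrences_through_def)

lemma map_fst_filter_tagged_copies:
  assumes "k < length occs"
  shows "map fst (filter (\<lambda>q. snd q = k) (tagged_copies occs n))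
           = filter (\<lambda>p. p \<in> set (occs ! k)) [0..<n]"
proof (induction n)
  case 0
  then show ?case by (simp add: tagged_copies_def)
next
  case (Suc n)
  have "filter (\<lambda>j. j = k) (occurrences_through occs n) = (if n \<in> set (occs ! k) then [k] else [])"
    using filter_upt_eq_singleton[OF assms, of "\<lambda>k. n \<in> set (occs ! k)"]
    by (simp add: occurrences_through_def)
  then have "map fst (filter (\<lambda>q. snd q = k) (map (Pair n) (occurrences_through occs n)))
               = (if n \<in> set (occs ! k) then [n] else [])"
    by (simp add: filter_map comp_def)
  with Suc.IH show ?case
    by (simp add: tagged_copies_def)
qed

lemma expand_word_occurrences_through_in_shuffle_closure:
  assumes occs: "\<forall>js\<in>set occs. occurrence C S js"
  shows "expand_word S (\<lambda>p. length (occurrences_through occs p)) \<in> shuffle_closure C"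
proof -
  define P where "P = tagged_copies occs (length S)"
  define W where "W = map (\<lambda>q. S ! fst q) P"
  define fibre where "fibre k = filter (\<lambda>x. snd (P ! x) = k) [0..<length P]" for k
  have tag_less: "snd (P ! x) < length occs" if "x < length P" for x
    using tagged_copies_snd_less nth_mem[OF that] unfolding P_def by blast
  have fibre_occurrence: "occurrence C W (fibre k)" if k: "k < length occs" for k
  proof (rule occurrence_lift)
    have "map (\<lambda>x. fst (P ! x)) (fibre k) = map fst (map (nth P) (fibre k))"
      by simp
    also have "\<dots> = map fst (filter (\<lambda>q. snd q = k) P)"
      unfolding fibre_def map_nth_filter_upt_length[of P "\<lambda>q. snd q = k"] ..
    also have "\<dots> = filter (\<lambda>p. p \<in> set (occs ! k)) [0..<length S]"
      unfolding P_def by (rule map_fst_filter_tagged_copies[OF k])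
    also have "\<dots> = occs ! k"
      using occs k by (intro filter_upt_mem_strict_sorted) (auto simp: occurrence_def)
    finally show "map (\<lambda>x. fst (P ! x)) (fibre k) = occs ! k" .
    show "occurrence C S (occs ! k)"
      using occs k by simp
    show "sorted_wrt (<) (fibre k)"
      unfolding fibre_def by (intro sorted_wrt_filter) simp
    show "\<forall>x\<in>set (fibre k). x < length W \<and> W ! x = S ! fst (P ! x)"
      unfolding fibre_def W_def by simp
  qed
  define fibres where "fibres = map fibre [0..<length occs]"
  have "W \<in> shuffle_closure C"
    unfolding shuffle_closure_def
  proof (intro CollectI exI[of _ fibres] conjI)
    show "\<forall>js\<in>set fibres. occurrence C W js"
      using fibre_occurrence unfolding fibres_def by auto
    show "\<forall>a<length fibres. \<forall>b<length fibres. a \<noteq> b \<longrightarrow> set (fibres ! a) \<inter> set (fibres ! b) = {}"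
      unfolding fibres_def fibre_def by auto
    show "(\<Union>js\<in>set fibres. set js) = {0..<length W}"
      using tag_less unfolding fibres_def fibre_def W_def by fastforce
  qed
  then show ?thesis
    unfolding W_def P_def expand_word_occurrences_through .
qed

lemma s_cover_obtains_covering_occurrences:
  assumes "s_cover C S"
  obtains occs where "\<forall>js\<in>set occs. occurrence C S js"
    and "\<forall>i<length S. \<exists>js\<in>set occs. i \<in> set js"
proof -
  obtain f where f: "\<And>i. i < length S \<Longrightarrow> occurrence C S (f i) \<and> i \<in> set (f i)"
    using assms unfolding s_cover_def by metis
  show thesis
  proof (rule that[of "map f [0..<length S]"])
    show "\<forall>js\<in>set (map f [0..<length S]). occurrence C S js"
      using f by auto
    show "\<forall>i<length S. \<exists>js\<in>set (map f [0..<length S]). i \<in> set js"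
      using f by (metis atLeastLessThan_iff image_eqI le0 set_map set_upt)
  qed
qed

theorem mainTheorem20:
  fixes S C :: "'a list"
  assumes "s_cover C S"
  shows "\<exists>r :: nat \<Rightarrow> nat. (\<forall>i<length S. r i > 0) \<and> expand_word S r \<in> shuffle_closure C"
proof -
  obtain occs where occs: "\<forall>js\<in>set occs. occurrence C S js"
    and covering: "\<forall>i<length S. \<exists>js\<in>set occs. i \<in> set js"
    using s_cover_obtains_covering_occurrences[OF assms] .
  let ?r = "\<lambda>p. length (occurrences_through occs p)"
  have "\<forall>i<length S. ?r i > 0"
    using covering occurrences_through_eq_Nil_iff by (metis length_greater_0_conv)
  moreover have "expand_word S ?r \<in> shuffle_closure C"
    using occs by (rule expand_word_occurrences_through_in_shuffle_closure)
  ultimately show ?thesis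
    by (intro exI[of _ ?r] conjI)
qed

end
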